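(* Let $G$ and $H$ be isoclinic finite groups. Then $A_G(t)=A_H\left(\frac{|G|}{|H|}t\right)$ and $B_G(t)=B_H\left(\frac{|G|}{|H|}t\right)$.
   Context: For a finite group $G$ and $n\ge 0$, $G$ acts on $G^n$ by simultaneous conjugation. Let $G^{(n)}\subseteq G^n$ be the set of $n$-tuples of pairwise commuting elements. Let $\alpha_{G,n}$ (resp. $\beta_{G,n}$) be the number of $G$-orbits on $G^n$ (resp. on $G^{(n)}$), and set $A_G(t)=\sum_{n\ge0}\alpha_{G,n}t^n$, $B_G(t)=\sum_{n\ge0}\beta_{G,n}t^n$; these are rational functions of $t$. Two finite groups $G$ and $H$ are isoclinic if there exist isomorphisms $\theta:G/Z(G)\to H/Z(H)$ and $\phi:G'\to H'$ (where $G'$ is the commutator subgroup) such that $\phi([g_1,g_2])=[h_1,h_2]$ whenever $\theta(g_iZ(G))=h_iZ(H)$ for $i=1,2$; i.e. $\phi\circ a_G=a_H\circ(\theta\times\theta)$ where $a_G(g_1Z(G),g_2Z(G))=[g_1,g_2]$. *)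

theory Defs
  imports "HOL-Algebra.Algebra" "HOL-Computational_Algebra.Formal_Power_Series"
begin

definition grp_center :: "('a, 'b) monoid_scheme \<Rightarrow> 'a set" where
  "grp_center G = {z \<in> carrier G. \<forall>g \<in> carrier G. z \<otimes>\<^bsub>G\<^esub> g = g \<otimes>\<^bsub>G\<^esub> z}"

text \<open>Commutator, with the same convention as the library's derived subgroup.\<close>
definition grp_comm :: "('a, 'b) monoid_scheme \<Rightarrow> 'a \<Rightarrow> 'a \<Rightarrow> 'a" where
  "grp_comm G x y = x \<otimes>\<^bsub>G\<^esub> y \<otimes>\<^bsub>G\<^esub> inv\<^bsub>G\<^esub> x \<otimes>\<^bsub>G\<^esub> inv\<^bsub>G\<^esub> y"

definition comm_subgroup :: "('a, 'b) monoid_scheme \<Rightarrow> ('a, 'b) monoid_scheme" where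
  "comm_subgroup G = G\<lparr>carrier := derived G (carrier G)\<rparr>"

definition isoclinic :: "('a, 'c) monoid_scheme \<Rightarrow> ('b, 'd) monoid_scheme \<Rightarrow> bool" where
  "isoclinic G H \<longleftrightarrow>
     (\<exists>\<theta> \<phi>. \<theta> \<in> iso (G Mod grp_center G) (H Mod grp_center H)
          \<and> \<phi> \<in> iso (comm_subgroup G) (comm_subgroup H)
          \<and> (\<forall>g1 \<in> carrier G. \<forall>g2 \<in> carrier G. \<forall>h1 \<in> carrier H. \<forall>h2 \<in> carrier H.
               \<theta> (grp_center G #>\<^bsub>G\<^esub> g1) = grp_center H #>\<^bsub>H\<^esub> h1 \<longrightarrow>
               \<theta> (grp_center G #>\<^bsub>G\<^esub> g2) = grp_center H #>\<^bsub>H\<^esub> h2 \<longrightarrow>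
               \<phi> (grp_comm G g1 g2) = grp_comm H h1 h2))"

definition tuples :: "('a, 'b) monoid_scheme \<Rightarrow> nat \<Rightarrow> 'a list set" where
  "tuples G n = {xs. length xs = n \<and> set xs \<subseteq> carrier G}"

definition comm_tuples :: "('a, 'b) monoid_scheme \<Rightarrow> nat \<Rightarrow> 'a list set" where
  "comm_tuples G n = {xs \<in> tuples G n.
     \<forall>i < n. \<forall>j < n. xs ! i \<otimes>\<^bsub>G\<^esub> xs ! j = xs ! j \<otimes>\<^bsub>G\<^esub> xs ! i}"

definition conj_tuple :: "('a, 'b) monoid_scheme \<Rightarrow> 'a \<Rightarrow> 'a list \<Rightarrow> 'a list" where
  "conj_tuple G g xs = map (\<lambda>x. g \<otimes>\<^bsub>G\<^esub> x \<otimes>\<^bsub>G\<^esub> inv\<^bsub>G\<^esub> g) xs"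

definition conj_orbit :: "('a, 'b) monoid_scheme \<Rightarrow> 'a list \<Rightarrow> 'a list set" where
  "conj_orbit G xs = {conj_tuple G g xs | g. g \<in> carrier G}"

definition num_orbits :: "('a, 'b) monoid_scheme \<Rightarrow> 'a list set \<Rightarrow> nat" where
  "num_orbits G S = card (conj_orbit G ` S)"

definition alpha :: "('a, 'b) monoid_scheme \<Rightarrow> nat \<Rightarrow> nat" where
  "alpha G n = num_orbits G (tuples G n)"

definition beta :: "('a, 'b) monoid_scheme \<Rightarrow> nat \<Rightarrow> nat" where
  "beta G n = num_orbits G (comm_tuples G n)"

definition gf_A :: "('a, 'b) monoid_scheme \<Rightarrow> rat fps" where
  "gf_A G = Abs_fps (\<lambda>n. of_nat (alpha G n))"

definition gf_B :: "('a, 'b) monoid_scheme \<Rightarrow> rat fps" where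
  "gf_B G = Abs_fps (\<lambda>n. of_nat (beta G n))"

end

theory Submission
  imports Defs
begin

text \<open>
  By Burnside's lemma, \<open>\<alpha>(G, n) |G|\<close> is the number of pairs \<open>(g, x)\<close> with \<open>g\<close> fixing
  the \<open>n\<close>-tuple \<open>x\<close>, i.e. of \<open>(n+1)\<close>-tuples whose first entry commutes with all the others;
  likewise \<open>\<beta>(G, n) |G|\<close> is the number of pairwise commuting \<open>(n+1)\<close>-tuples. Whether two
  elements commute only depends on their cosets modulo the centre, and an isoclinism carries
  this relation on \<open>G/Z(G)\<close> to the one on \<open>H/Z(H)\<close>. Hence for every commutation pattern the
  \<open>m\<close>-tuples of \<open>G\<close> and of \<open>H\<close> with that pattern number \<open>|Z(G)|\<^sup>m N\<close> and \<open>|Z(H)|\<^sup>m N\<close>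
  for one and the same \<open>N\<close>. Since \<open>|G|/|H| = |Z(G)|/|Z(H)|\<close>, this gives
  \<open>\<alpha>(G, n) = (|G|/|H|)\<^sup>n \<alpha>(H, n)\<close>, and the same for \<open>\<beta>\<close>.
\<close>

section \<open>Counting tuples by their commutation pattern\<close>

abbreviation commutes :: "('a, 'b) monoid_scheme \<Rightarrow> 'a \<Rightarrow> 'a \<Rightarrow> bool" where
  "commutes G x y \<equiv> x \<otimes>\<^bsub>G\<^esub> y = y \<otimes>\<^bsub>G\<^esub> x"

definition rel_graph :: "('x \<Rightarrow> 'x \<Rightarrow> bool) \<Rightarrow> 'x list \<Rightarrow> (nat \<times> nat) set" where
  "rel_graph R xs = {(i, j). i < length xs \<and> j < length xs \<and> R (xs ! i) (xs ! j)}"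

lemma mem_rel_graph_iff:
  "(i, j) \<in> rel_graph R xs \<longleftrightarrow> i < length xs \<and> j < length xs \<and> R (xs ! i) (xs ! j)"
  by (simp add: rel_graph_def)

lemma rel_graph_map:
  assumes "\<And>x y. x \<in> set xs \<Longrightarrow> y \<in> set xs \<Longrightarrow> R x y = S (f x) (f y)"
  shows "rel_graph R xs = rel_graph S (map f xs)"
  using assms by (auto simp: rel_graph_def)

lemma star_rel_graph_Cons_iff:
  assumes "length xs = n"
  shows "{0} \<times> {..n} \<subseteq> rel_graph R (x # xs) \<longleftrightarrow> R x x \<and> (\<forall>y \<in> set xs. R x y)"
  using assms
  by (auto simp: mem_rel_graph_iff subset_iff all_set_conv_all_nth less_Suc_eq_le[symmetric]
      All_less_Suc2)

lemma complete_rel_graph_Cons_iff: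
  assumes "length xs = n"
  shows "{..n} \<times> {..n} \<subseteq> rel_graph R (x # xs) \<longleftrightarrow>
     R x x \<and> (\<forall>y \<in> set xs. R x y \<and> R y x) \<and> {..<n} \<times> {..<n} \<subseteq> rel_graph R xs"
proof -
  have "{..n} \<times> {..n} \<subseteq> rel_graph R (x # xs) \<longleftrightarrow>
      (\<forall>i < Suc n. \<forall>j < Suc n. R ((x # xs) ! i) ((x # xs) ! j))"
    using assms by (auto simp: mem_rel_graph_iff subset_iff less_Suc_eq_le[symmetric])
  then show ?thesis using assms
    by (auto simp: mem_rel_graph_iff All_less_Suc2 all_set_conv_all_nth subset_iff)
qed

lemma card_eq_mult_card_if_fibres_const:
  assumes "finite A" "finite B" "f ` A \<subseteq> B" "\<And>b. b \<in> B \<Longrightarrow> card {a \<in> A. f a = b} = k"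
  shows "card A = k * card B"
proof -
  have "card A = (\<Sum>b\<in>B. card {a \<in> A. f a = b})"
    using sum.group[OF assms(1-3), of "\<lambda>_. 1::nat"] by simp
  then show ?thesis using assms(4) by simp
qed

lemma card_lists_map_eq:
  assumes "finite A" "\<And>b. b \<in> B \<Longrightarrow> card {a \<in> A. f a = b} = k" "set ys \<subseteq> B"
  shows "card {xs. set xs \<subseteq> A \<and> map f xs = ys} = k ^ length ys"
  using assms(3)
proof (induction ys)
  case Nil
  have "{xs. set xs \<subseteq> A \<and> map f xs = []} = {[]}" by auto
  then show ?case by simp
next
  case (Cons y ys)
  have "{xs. set xs \<subseteq> A \<and> map f xs = y # ys}
      = case_prod Cons ` ({a \<in> A. f a = y} \<times> {xs. set xs \<subseteq> A \<and> map f xs = ys})"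
    by (auto simp: Cons_eq_map_conv image_iff)
  also have "card \<dots> = card ({a \<in> A. f a = y} \<times> {xs. set xs \<subseteq> A \<and> map f xs = ys})"
    by (rule card_image) (auto simp: inj_on_def)
  also have "\<dots> = k * k ^ length ys"
    using Cons by (simp add: card_cartesian_product assms(2))
  finally show ?case by simp
qed

lemma card_tuples_rel_graph_fibres:
  assumes "finite A" "finite B" "f ` A \<subseteq> B" "\<And>b. b \<in> B \<Longrightarrow> card {a \<in> A. f a = b} = k"
    and "\<And>x y. x \<in> A \<Longrightarrow> y \<in> A \<Longrightarrow> R x y = S (f x) (f y)"
  shows "card {xs. length xs = m \<and> set xs \<subseteq> A \<and> Q (rel_graph R xs)}
       = k ^ m * card {ys. length ys = m \<and> set ys \<subseteq> B \<and> Q (rel_graph S ys)}"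
proof (rule card_eq_mult_card_if_fibres_const[where f = "map f"])
  have graph: "rel_graph R xs = rel_graph S (map f xs)" if "set xs \<subseteq> A" for xs
    using that assms(5) by (intro rel_graph_map) auto
  show "finite {xs. length xs = m \<and> set xs \<subseteq> A \<and> Q (rel_graph R xs)}"
    using finite_lists_length_eq[OF assms(1), of m] by (rule rev_finite_subset) auto
  show "finite {ys. length ys = m \<and> set ys \<subseteq> B \<and> Q (rel_graph S ys)}"
    using finite_lists_length_eq[OF assms(2), of m] by (rule rev_finite_subset) auto
  show "map f ` {xs. length xs = m \<and> set xs \<subseteq> A \<and> Q (rel_graph R xs)}
      \<subseteq> {ys. length ys = m \<and> set ys \<subseteq> B \<and> Q (rel_graph S ys)}"
    using assms(3) graph by fastforce
  fix ys assume ys: "ys \<in> {ys. length ys = m \<and> set ys \<subseteq> B \<and> Q (rel_graph S ys)}"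
  then have "{xs \<in> {xs. length xs = m \<and> set xs \<subseteq> A \<and> Q (rel_graph R xs)}. map f xs = ys}
      = {xs. set xs \<subseteq> A \<and> map f xs = ys}"
    using graph by auto
  then show "card {xs \<in> {xs. length xs = m \<and> set xs \<subseteq> A \<and> Q (rel_graph R xs)}. map f xs = ys}
      = k ^ m"
    using card_lists_map_eq[OF assms(1,4)] ys by auto
qed

lemma card_Cons_pairs:
  assumes "[] \<notin> T"
  shows "card {(x, xs). x # xs \<in> T} = card T"
proof -
  have "T = case_prod Cons ` {(x, xs). x # xs \<in> T}"
  proof (rule Set.set_eqI)
    show "ys \<in> T \<longleftrightarrow> ys \<in> case_prod Cons ` {(x, xs). x # xs \<in> T}" for ys
      using assms by (cases ys) auto
  qed
  moreover have "inj (case_prod Cons)" by (auto intro: injI)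
  ultimately show ?thesis by (metis card_image inj_on_subset subset_UNIV)
qed

section \<open>Burnside's lemma for simultaneous conjugation\<close>

lemma conj_tuple_one:
  assumes "group G" "set xs \<subseteq> carrier G"
  shows "conj_tuple G \<one>\<^bsub>G\<^esub> xs = xs"
proof -
  interpret group G by fact
  show ?thesis using assms(2) unfolding conj_tuple_def by (induction xs) auto
qed

lemma conj_tuple_mult:
  assumes "group G" "set xs \<subseteq> carrier G" "g \<in> carrier G" "h \<in> carrier G"
  shows "conj_tuple G g (conj_tuple G h xs) = conj_tuple G (g \<otimes>\<^bsub>G\<^esub> h) xs"
proof -
  interpret group G by fact
  show ?thesis using assms(2-4) unfolding conj_tuple_def
    by (induction xs) (auto simp: m_assoc inv_mult_group)
qed

lemma conj_tuple_eq_self_iff: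
  fixes G (structure)
  assumes "group G" "g \<in> carrier G" "set xs \<subseteq> carrier G"
  shows "conj_tuple G g xs = xs \<longleftrightarrow> (\<forall>x \<in> set xs. commutes G g x)"
proof -
  interpret group G by fact
  have conj_fixes: "g \<otimes> x \<otimes> inv g = x \<longleftrightarrow> commutes G g x" if "x \<in> carrier G" for x
    using assms(2) that by (metis inv_solve_right m_closed)
  have "conj_tuple G g xs = xs \<longleftrightarrow> (\<forall>x \<in> set xs. g \<otimes> x \<otimes> inv g = x)"
    unfolding conj_tuple_def by (induction xs) auto
  also have "\<dots> \<longleftrightarrow> (\<forall>x \<in> set xs. commutes G g x)"
    using assms(3) conj_fixes by blast
  finally show ?thesis .
qed

lemma group_action_conj_tuple:
  fixes G (structure)
  assumes "group G" "\<And>xs. xs \<in> S \<Longrightarrow> set xs \<subseteq> carrier G"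
    and "\<And>g xs. g \<in> carrier G \<Longrightarrow> xs \<in> S \<Longrightarrow> conj_tuple G g xs \<in> S"
  shows "group_action G S (\<lambda>g. \<lambda>xs \<in> S. conj_tuple G g xs)"
proof -
  interpret group G by fact
  have bij: "bij_betw (conj_tuple G g) S S" if g: "g \<in> carrier G" for g
  proof (rule bij_betw_byWitness[where f' = "conj_tuple G (inv g)"])
    show "\<forall>xs \<in> S. conj_tuple G (inv g) (conj_tuple G g xs) = xs"
      "\<forall>xs \<in> S. conj_tuple G g (conj_tuple G (inv g) xs) = xs"
      using g assms(2) by (simp_all add: conj_tuple_mult conj_tuple_one)
  qed (use g assms(3) in auto)
  have Bij: "(\<lambda>xs \<in> S. conj_tuple G g xs) \<in> Bij S" if "g \<in> carrier G" for g
    using bij[OF that] by (simp add: Bij_def bij_betw_restrict_eq)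
  show ?thesis
    unfolding group_action_def group_hom_def group_hom_axioms_def hom_def
  proof (intro conjI CollectI ballI Pi_I)
    show "group G" "group (BijGroup S)" by (simp_all add: assms(1) group_BijGroup)
    show "(\<lambda>xs \<in> S. conj_tuple G g xs) \<in> carrier (BijGroup S)" if "g \<in> carrier G" for g
      using Bij[OF that] by (simp add: BijGroup_def)
    fix g h assume "g \<in> carrier G" "h \<in> carrier G"
    then show "(\<lambda>xs \<in> S. conj_tuple G (g \<otimes> h) xs)
        = (\<lambda>xs \<in> S. conj_tuple G g xs) \<otimes>\<^bsub>BijGroup S\<^esub> (\<lambda>xs \<in> S. conj_tuple G h xs)"
      using Bij assms(2,3) by (auto simp: BijGroup_def compose_def conj_tuple_mult fun_eq_iff)
  qed
qed

lemma finite_tuples: "finite (carrier G) \<Longrightarrow> finite (tuples G n)"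
  unfolding tuples_def using finite_lists_length_eq by (simp add: conj_commute)

lemma Collect_mem_tuples_eq:
  "{xs \<in> tuples G m. P xs} = {xs. length xs = m \<and> set xs \<subseteq> carrier G \<and> P xs}"
  by (auto simp: tuples_def)

lemma Cons_mem_tuples_iff: "x # xs \<in> tuples G (Suc n) \<longleftrightarrow> x \<in> carrier G \<and> xs \<in> tuples G n"
  by (auto simp: tuples_def)

lemma num_orbits_mult_order:
  assumes "group G" "finite (carrier G)" "S \<subseteq> tuples G n"
    and "\<And>g xs. g \<in> carrier G \<Longrightarrow> xs \<in> S \<Longrightarrow> conj_tuple G g xs \<in> S"
  shows "num_orbits G S * order G
       = card {(g, xs). g \<in> carrier G \<and> xs \<in> S \<and> conj_tuple G g xs = xs}"
proof -
  define \<phi> where "\<phi> g = (\<lambda>xs \<in> S. conj_tuple G g xs)" for g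
  interpret group_action G S \<phi>
    unfolding \<phi>_def using assms(1,3,4) by (intro group_action_conj_tuple) (auto simp: tuples_def)
  have "finite S"
    using finite_tuples[OF assms(2)] assms(3) by (rule finite_subset[rotated])
  have "orbits G S \<phi> = conj_orbit G ` S"
    unfolding orbits_def orbit_def conj_orbit_def \<phi>_def by auto
  then have "num_orbits G S * order G = (\<Sum>g \<in> carrier G. card (invariants S \<phi> g))"
    using burnside[OF assms(2) \<open>finite S\<close>] by (simp add: num_orbits_def)
  also have "\<dots> = card (SIGMA g:carrier G. invariants S \<phi> g)"
    using assms(2) \<open>finite S\<close> by (simp add: card_SigmaI invariants_def)
  also have "(SIGMA g:carrier G. invariants S \<phi> g)
      = {(g, xs). g \<in> carrier G \<and> xs \<in> S \<and> conj_tuple G g xs = xs}"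
    unfolding invariants_def \<phi>_def by auto
  finally show ?thesis .
qed

lemma alpha_mult_order:
  assumes "group G" "finite (carrier G)"
  shows "alpha G n * order G
       = card {xs \<in> tuples G (Suc n). {0} \<times> {..n} \<subseteq> rel_graph (commutes G) xs}"
proof -
  interpret group G by fact
  have "alpha G n * order G
      = card {(g, xs). g \<in> carrier G \<and> xs \<in> tuples G n \<and> conj_tuple G g xs = xs}"
    unfolding alpha_def using assms
    by (intro num_orbits_mult_order[where n = n]) (auto simp: tuples_def conj_tuple_def)
  also have "{(g, xs). g \<in> carrier G \<and> xs \<in> tuples G n \<and> conj_tuple G g xs = xs}
      = {(g, xs). g # xs \<in> {xs \<in> tuples G (Suc n). {0} \<times> {..n} \<subseteq> rel_graph (commutes G) xs}}"
  proof -
    have "conj_tuple G g xs = xs \<longleftrightarrow> {0} \<times> {..n} \<subseteq> rel_graph (commutes G) (g # xs)"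
      if "g \<in> carrier G" "xs \<in> tuples G n" for g xs
      using that by (simp add: tuples_def conj_tuple_eq_self_iff star_rel_graph_Cons_iff)
    then show ?thesis by (auto simp: Cons_mem_tuples_iff)
  qed
  also have "card \<dots> = card {xs \<in> tuples G (Suc n). {0} \<times> {..n} \<subseteq> rel_graph (commutes G) xs}"
    by (rule card_Cons_pairs) (simp add: tuples_def)
  finally show ?thesis .
qed

lemma comm_tuples_eq:
  "comm_tuples G n = {xs \<in> tuples G n. {..<n} \<times> {..<n} \<subseteq> rel_graph (commutes G) xs}"
  by (auto simp: comm_tuples_def tuples_def mem_rel_graph_iff)

lemma beta_mult_order:
  fixes G (structure)
  assumes "group G" "finite (carrier G)"
  shows "beta G n * order G
       = card {xs \<in> tuples G (Suc n). {..n} \<times> {..n} \<subseteq> rel_graph (commutes G) xs}"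
proof -
  interpret group G by fact
  have "beta G n * order G
      = card {(g, xs). g \<in> carrier G \<and> xs \<in> comm_tuples G n \<and> conj_tuple G g xs = xs}"
    unfolding beta_def using assms
  proof (intro num_orbits_mult_order[where n = n])
    fix g xs assume g: "g \<in> carrier G" and "xs \<in> comm_tuples G n"
    have conj_mult: "g \<otimes> x \<otimes> inv g \<otimes> (g \<otimes> y \<otimes> inv g) = g \<otimes> (x \<otimes> y) \<otimes> inv g"
      if "x \<in> carrier G" "y \<in> carrier G" for x y
      using g that by (simp add: m_assoc flip: m_assoc[of "inv g" g])
    show "conj_tuple G g xs \<in> comm_tuples G n"
      using \<open>xs \<in> comm_tuples G n\<close> g
      by (auto simp: comm_tuples_def tuples_def conj_tuple_def conj_mult subset_iff)
  qed (auto simp: comm_tuples_def)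
  also have "{(g, xs). g \<in> carrier G \<and> xs \<in> comm_tuples G n \<and> conj_tuple G g xs = xs}
      = {(g, xs). g # xs \<in> {xs \<in> tuples G (Suc n). {..n} \<times> {..n} \<subseteq> rel_graph (commutes G) xs}}"
  proof -
    have "xs \<in> comm_tuples G n \<and> conj_tuple G g xs = xs \<longleftrightarrow>
        {..n} \<times> {..n} \<subseteq> rel_graph (commutes G) (g # xs)"
      if "g \<in> carrier G" "xs \<in> tuples G n" for g xs
      using that
      by (auto simp: tuples_def comm_tuples_eq conj_tuple_eq_self_iff complete_rel_graph_Cons_iff)
    moreover have "comm_tuples G n \<subseteq> tuples G n" by (auto simp: comm_tuples_def)
    ultimately show ?thesis by (auto simp: Cons_mem_tuples_iff)
  qed
  also have "card \<dots> = card {xs \<in> tuples G (Suc n). {..n} \<times> {..n} \<subseteq> rel_graph (commutes G) xs}"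
    by (rule card_Cons_pairs) (simp add: tuples_def)
  finally show ?thesis .
qed

section \<open>Centres and isoclinism\<close>

lemma grp_centerD:
  assumes "z \<in> grp_center G"
  shows "z \<in> carrier G" and "g \<in> carrier G \<Longrightarrow> z \<otimes>\<^bsub>G\<^esub> g = g \<otimes>\<^bsub>G\<^esub> z"
  using assms unfolding grp_center_def by blast+

lemma center_subgroup:
  fixes G (structure)
  assumes "group G"
  shows "subgroup (grp_center G) G"
proof -
  interpret group G by fact
  show ?thesis
  proof (rule subgroupI)
    fix a b assume a: "a \<in> grp_center G" and b: "b \<in> grp_center G"
    have "inv a \<otimes> g = g \<otimes> inv a" if "g \<in> carrier G" for g
    proof -
      have "a \<in> carrier G" "a \<otimes> g = g \<otimes> a" using grp_centerD[OF a] that by blast+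
      then show ?thesis
        using that by (metis inv_closed inv_solve_left inv_solve_right m_assoc m_closed)
    qed
    then show "inv a \<in> grp_center G"
      using a unfolding grp_center_def by blast
    have "a \<otimes> b \<otimes> g = g \<otimes> (a \<otimes> b)" if g: "g \<in> carrier G" for g
    proof -
      have ab: "a \<in> carrier G" "b \<in> carrier G" "a \<otimes> g = g \<otimes> a" "b \<otimes> g = g \<otimes> b"
        using grp_centerD[OF a] grp_centerD[OF b] g by blast+
      then have "a \<otimes> b \<otimes> g = a \<otimes> (g \<otimes> b)" using g by (simp add: m_assoc)
      also have "\<dots> = g \<otimes> a \<otimes> b" using ab g by (simp flip: m_assoc)
      finally show ?thesis using ab g by (simp add: m_assoc)
    qed
    then show "a \<otimes> b \<in> grp_center G"
      using a b unfolding grp_center_def by blast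
  qed (auto simp: grp_center_def)
qed

lemma card_center_pos:
  assumes "group G" "finite (carrier G)"
  shows "card (grp_center G) > 0"
proof -
  have "\<one>\<^bsub>G\<^esub> \<in> grp_center G" "finite (grp_center G)"
    using assms subgroup.one_closed[OF center_subgroup[OF assms(1)]]
    by (auto simp: grp_center_def)
  then show ?thesis by (auto simp: card_gt_0_iff)
qed

lemma commutes_iff_grp_comm_eq_one:
  fixes G (structure)
  assumes "group G" "x \<in> carrier G" "y \<in> carrier G"
  shows "commutes G x y \<longleftrightarrow> grp_comm G x y = \<one>"
proof -
  interpret group G by fact
  have "grp_comm G x y = (x \<otimes> y) \<otimes> inv (y \<otimes> x)"
    unfolding grp_comm_def using assms(2,3) by (simp add: m_assoc inv_mult_group)
  then show ?thesis
    using assms(2,3) by (metis inv_solve_right l_one m_closed one_closed)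
qed

lemma commutes_mult_central:
  fixes G (structure)
  assumes "group G" "z1 \<in> grp_center G" "z2 \<in> grp_center G" "x \<in> carrier G" "y \<in> carrier G"
  shows "commutes G (z1 \<otimes> x) (z2 \<otimes> y) \<longleftrightarrow> commutes G x y"
proof -
  interpret group G by fact
  have z: "z1 \<in> carrier G" "z2 \<in> carrier G"
    and central: "x \<otimes> z2 = z2 \<otimes> x" "y \<otimes> z1 = z1 \<otimes> y" "z2 \<otimes> z1 = z1 \<otimes> z2"
    using assms(2-5) grp_centerD by metis+
  have "z1 \<otimes> x \<otimes> (z2 \<otimes> y) = z1 \<otimes> (x \<otimes> z2) \<otimes> y"
    using assms(4,5) z by (simp add: m_assoc)
  also have "\<dots> = z1 \<otimes> z2 \<otimes> (x \<otimes> y)"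
    using assms(4,5) z by (simp add: central(1) m_assoc)
  finally have xy: "z1 \<otimes> x \<otimes> (z2 \<otimes> y) = z1 \<otimes> z2 \<otimes> (x \<otimes> y)" .
  have "z2 \<otimes> y \<otimes> (z1 \<otimes> x) = z2 \<otimes> (y \<otimes> z1) \<otimes> x"
    using assms(4,5) z by (simp add: m_assoc)
  also have "\<dots> = z2 \<otimes> z1 \<otimes> (y \<otimes> x)"
    using assms(4,5) z by (simp add: central(2) m_assoc)
  finally have yx: "z2 \<otimes> y \<otimes> (z1 \<otimes> x) = z1 \<otimes> z2 \<otimes> (y \<otimes> x)"
    by (simp only: central(3))
  show ?thesis
    unfolding xy yx using assms(4,5) z by simp
qed

definition cosets_commute :: "('a, 'b) monoid_scheme \<Rightarrow> 'a set \<Rightarrow> 'a set \<Rightarrow> bool" where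
  "cosets_commute G C D \<longleftrightarrow> (\<exists>x \<in> C. \<exists>y \<in> D. commutes G x y)"

lemma cosets_commute_rcoset_center:
  fixes G (structure)
  assumes "group G" "x \<in> carrier G" "y \<in> carrier G"
  shows "cosets_commute G (grp_center G #> x) (grp_center G #> y) \<longleftrightarrow> commutes G x y"
proof -
  interpret group G by fact
  show ?thesis
  proof
    assume "cosets_commute G (grp_center G #> x) (grp_center G #> y)"
    then obtain z1 z2 where z: "z1 \<in> grp_center G" "z2 \<in> grp_center G"
      and "commutes G (z1 \<otimes> x) (z2 \<otimes> y)"
      unfolding cosets_commute_def r_coset_def by blast
    then show "commutes G x y" using commutes_mult_central[OF assms(1) z assms(2,3)] by simp
  next
    assume "commutes G x y"
    moreover have "x \<in> grp_center G #> x" "y \<in> grp_center G #> y"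
      using assms(2,3) center_subgroup[OF assms(1)] by (simp_all add: rcos_self)
    ultimately show "cosets_commute G (grp_center G #> x) (grp_center G #> y)"
      unfolding cosets_commute_def by blast
  qed
qed

lemma card_rcoset_fibre:
  fixes G (structure)
  assumes "group G" "subgroup Z G" "x \<in> carrier G"
  shows "card {y \<in> carrier G. Z #> y = Z #> x} = card Z"
proof -
  interpret group G by fact
  have "{y \<in> carrier G. Z #> y = Z #> x} = Z #> x"
    using assms(2,3) repr_independence rcos_self subgroup.elemrcos_carrier[OF assms(2,1,3)]
    by blast
  then show ?thesis
    using card_rcosets_equal[OF rcosetsI] assms(2,3) subgroup.subset by metis
qed

lemma isoclinism_commutes_iff:
  assumes "group G" "group H" "\<phi> \<in> iso (comm_subgroup G) (comm_subgroup H)"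
    and "x \<in> carrier G" "y \<in> carrier G" "u \<in> carrier H" "v \<in> carrier H"
    and "\<phi> (grp_comm G x y) = grp_comm H u v"
  shows "commutes G x y \<longleftrightarrow> commutes H u v"
proof -
  interpret G: group G by fact
  interpret H: group H by fact
  have derived_G: "subgroup (derived G (carrier G)) G"
    by (simp add: G.derived_is_subgroup)
  have derived_H: "subgroup (derived H (carrier H)) H"
    by (simp add: H.derived_is_subgroup)
  have "\<phi> \<in> hom (comm_subgroup G) (comm_subgroup H)" "inj_on \<phi> (derived G (carrier G))"
    using assms(3) by (auto simp: iso_def bij_betw_def comm_subgroup_def)
  moreover have "group (comm_subgroup G)" "group (comm_subgroup H)"
    unfolding comm_subgroup_def
    using derived_G derived_H assms(1,2) by (simp_all add: subgroup.subgroup_is_group)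
  ultimately have "\<phi> \<one>\<^bsub>G\<^esub> = \<one>\<^bsub>H\<^esub>" "inj_on \<phi> (derived G (carrier G))"
    using group_hom.hom_one[of "comm_subgroup G" "comm_subgroup H" \<phi>]
    by (auto simp: group_hom_def group_hom_axioms_def comm_subgroup_def)
  moreover have "grp_comm G x y \<in> derived G (carrier G)"
    unfolding derived_def grp_comm_def using assms(4,5) by (blast intro: generate.incl)
  moreover have "\<one>\<^bsub>G\<^esub> \<in> derived G (carrier G)"
    using derived_G subgroup.one_closed by blast
  ultimately show ?thesis
    using assms(1,2,4-8) commutes_iff_grp_comm_eq_one inj_on_eq_iff by metis
qed

lemma isoclinic_card_central_quotient:
  assumes "isoclinic G H"
  shows "card (rcosets\<^bsub>G\<^esub> grp_center G) = card (rcosets\<^bsub>H\<^esub> grp_center H)"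
proof -
  obtain \<theta> where "\<theta> \<in> iso (G Mod grp_center G) (H Mod grp_center H)"
    using assms unfolding isoclinic_def by blast
  then have "bij_betw \<theta> (rcosets\<^bsub>G\<^esub> grp_center G) (rcosets\<^bsub>H\<^esub> grp_center H)"
    by (simp add: iso_def FactGroup_def)
  then show ?thesis by (rule bij_betw_same_card)
qed

lemma isoclinic_obtains_coset_map:
  fixes G :: "('a, 'c) monoid_scheme" and H :: "('b, 'd) monoid_scheme"
  assumes "group G" "group H" "isoclinic G H"
  obtains f where "f \<in> carrier G \<rightarrow> rcosets\<^bsub>H\<^esub> grp_center H"
    and "\<And>C. C \<in> rcosets\<^bsub>H\<^esub> grp_center H \<Longrightarrow> card {x \<in> carrier G. f x = C} = card (grp_center G)"
    and "\<And>x y. x \<in> carrier G \<Longrightarrow> y \<in> carrier G \<Longrightarrow>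
           commutes G x y \<longleftrightarrow> cosets_commute H (f x) (f y)"
proof -
  interpret G: group G by fact
  interpret H: group H by fact
  define ZG where "ZG = grp_center G"
  define ZH where "ZH = grp_center H"
  obtain \<theta> \<phi> where \<theta>: "\<theta> \<in> iso (G Mod ZG) (H Mod ZH)"
    and \<phi>: "\<phi> \<in> iso (comm_subgroup G) (comm_subgroup H)"
    and comm: "\<And>x y u v. x \<in> carrier G \<Longrightarrow> y \<in> carrier G \<Longrightarrow> u \<in> carrier H \<Longrightarrow> v \<in> carrier H \<Longrightarrow>
        \<theta> (ZG #>\<^bsub>G\<^esub> x) = ZH #>\<^bsub>H\<^esub> u \<Longrightarrow> \<theta> (ZG #>\<^bsub>G\<^esub> y) = ZH #>\<^bsub>H\<^esub> v \<Longrightarrow>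
        \<phi> (grp_comm G x y) = grp_comm H u v"
    using assms(3) unfolding isoclinic_def ZG_def ZH_def by blast
  have bij: "bij_betw \<theta> (rcosets\<^bsub>G\<^esub> ZG) (rcosets\<^bsub>H\<^esub> ZH)"
    using \<theta> by (simp add: iso_def FactGroup_def)
  have ZG: "subgroup ZG G" and ZH: "subgroup ZH H"
    unfolding ZG_def ZH_def using assms(1,2) by (simp_all add: center_subgroup)
  have rcoset_G: "ZG #>\<^bsub>G\<^esub> x \<in> rcosets\<^bsub>G\<^esub> ZG" if "x \<in> carrier G" for x
    using ZG that by (simp add: G.rcosetsI subgroup.subset)
  define f where "f x = \<theta> (ZG #>\<^bsub>G\<^esub> x)" for x
  show thesis
  proof (rule that[of f])
    show f_into: "f \<in> carrier G \<rightarrow> rcosets\<^bsub>H\<^esub> grp_center H"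
      using bij rcoset_G unfolding f_def ZH_def by (auto dest: bij_betwE)
    fix C assume "C \<in> rcosets\<^bsub>H\<^esub> grp_center H"
    then obtain D where "D \<in> rcosets\<^bsub>G\<^esub> ZG" "C = \<theta> D"
      using bij unfolding ZH_def[symmetric] bij_betw_def by auto
    then obtain x0 where x0: "x0 \<in> carrier G" "C = f x0"
      unfolding f_def RCOSETS_def by auto
    have "{x \<in> carrier G. f x = C} = {x \<in> carrier G. ZG #>\<^bsub>G\<^esub> x = ZG #>\<^bsub>G\<^esub> x0}"
      using x0 rcoset_G bij unfolding f_def bij_betw_def by (auto simp: inj_on_eq_iff)
    then show "card {x \<in> carrier G. f x = C} = card (grp_center G)"
      using card_rcoset_fibre[OF assms(1) ZG x0(1)] by (simp add: ZG_def)
  next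
    fix x y assume xy: "x \<in> carrier G" "y \<in> carrier G"
    have "f x \<in> rcosets\<^bsub>H\<^esub> ZH" "f y \<in> rcosets\<^bsub>H\<^esub> ZH"
      using xy bij rcoset_G unfolding f_def by (auto dest: bij_betwE)
    then obtain u v where uv: "u \<in> carrier H" "v \<in> carrier H" "f x = ZH #>\<^bsub>H\<^esub> u" "f y = ZH #>\<^bsub>H\<^esub> v"
      unfolding RCOSETS_def by auto
    have "commutes G x y \<longleftrightarrow> commutes H u v"
      using isoclinism_commutes_iff[OF assms(1,2) \<phi> xy uv(1,2)] comm[OF xy uv(1,2)] uv(3,4)
      unfolding f_def by blast
    also have "\<dots> \<longleftrightarrow> cosets_commute H (f x) (f y)"
      using cosets_commute_rcoset_center[OF assms(2) uv(1,2)] uv(3,4) by (simp add: ZH_def)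
    finally show "commutes G x y \<longleftrightarrow> cosets_commute H (f x) (f y)" .
  qed
qed

lemma isoclinic_card_commuting_tuples:
  fixes G :: "('a, 'c) monoid_scheme" and H :: "('b, 'd) monoid_scheme"
  assumes "group G" "finite (carrier G)" "group H" "finite (carrier H)" "isoclinic G H"
  shows "card {xs \<in> tuples G m. Q (rel_graph (commutes G) xs)} * card (grp_center H) ^ m
       = card {xs \<in> tuples H m. Q (rel_graph (commutes H) xs)} * card (grp_center G) ^ m"
proof -
  interpret H: group H by fact
  define N where "N = card {Cs. length Cs = m \<and> set Cs \<subseteq> rcosets\<^bsub>H\<^esub> grp_center H
      \<and> Q (rel_graph (cosets_commute H) Cs)}"
  have Z: "subgroup (grp_center H) H" by (rule center_subgroup[OF assms(3)])
  have fin: "finite (rcosets\<^bsub>H\<^esub> grp_center H)"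
    using assms(4) by (simp add: RCOSETS_def)
  obtain f where "f \<in> carrier G \<rightarrow> rcosets\<^bsub>H\<^esub> grp_center H"
    and "\<And>C. C \<in> rcosets\<^bsub>H\<^esub> grp_center H \<Longrightarrow> card {x \<in> carrier G. f x = C} = card (grp_center G)"
    and "\<And>x y. x \<in> carrier G \<Longrightarrow> y \<in> carrier G \<Longrightarrow> commutes G x y \<longleftrightarrow> cosets_commute H (f x) (f y)"
    using isoclinic_obtains_coset_map[OF assms(1,3,5)] by blast
  then have count_G:
    "card {xs \<in> tuples G m. Q (rel_graph (commutes G) xs)} = card (grp_center G) ^ m * N"
    unfolding Collect_mem_tuples_eq N_def using assms(2) fin
    by (intro card_tuples_rel_graph_fibres) auto
  have "card {xs \<in> tuples H m. Q (rel_graph (commutes H) xs)} = card (grp_center H) ^ m * N"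
    unfolding Collect_mem_tuples_eq N_def using assms(4) fin
  proof (intro card_tuples_rel_graph_fibres)
    show "(\<lambda>x. grp_center H #>\<^bsub>H\<^esub> x) ` carrier H \<subseteq> rcosets\<^bsub>H\<^esub> grp_center H"
      using H.rcosetsI[OF subgroup.subset[OF Z]] by blast
    show "card {x \<in> carrier H. grp_center H #>\<^bsub>H\<^esub> x = C} = card (grp_center H)"
      if "C \<in> rcosets\<^bsub>H\<^esub> grp_center H" for C
      using that card_rcoset_fibre[OF assms(3) Z] unfolding RCOSETS_def by auto
    show "commutes H x y \<longleftrightarrow> cosets_commute H (grp_center H #>\<^bsub>H\<^esub> x) (grp_center H #>\<^bsub>H\<^esub> y)"
      if "x \<in> carrier H" "y \<in> carrier H" for x y
      using cosets_commute_rcoset_center[OF assms(3) that] by simp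
  qed
  with count_G show ?thesis by simp
qed

lemma ratio_eq_if_scaled_counts_eq:
  fixes a b p q zp zq :: nat
  assumes orders: "p * zq = q * zp" and counts: "a * p * zq ^ Suc n = b * q * zp ^ Suc n"
    and "zp > 0" "q > 0"
  shows "(of_nat a :: rat) = (of_nat p / of_nat q) ^ n * of_nat b"
proof -
  have "q * zp * (a * zq ^ n) = a * (p * zq) * zq ^ n"
    by (simp only: orders) (simp add: ac_simps)
  also have "\<dots> = q * zp * (b * zp ^ n)"
    using counts by (simp add: ac_simps)
  finally have "a * zq ^ n = b * zp ^ n"
    using \<open>q > 0\<close> \<open>zp > 0\<close> by simp
  have "a * q ^ n * zp ^ n = a * (p * zq) ^ n"
    by (simp only: power_mult_distrib [symmetric] orders mult.assoc)
  also have "\<dots> = p ^ n * (a * zq ^ n)"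
    by (simp add: power_mult_distrib ac_simps)
  also have "\<dots> = b * p ^ n * zp ^ n"
    using \<open>a * zq ^ n = b * zp ^ n\<close> by (simp add: ac_simps)
  finally have "a * q ^ n = b * p ^ n"
    using \<open>zp > 0\<close> by simp
  then have "(of_nat a :: rat) * of_nat q ^ n = of_nat p ^ n * of_nat b"
    by (metis mult.commute of_nat_mult of_nat_power)
  then show ?thesis
    using \<open>q > 0\<close> by (simp add: power_divide field_simps)
qed

lemma isoclinic_count_scaling:
  fixes G :: "('a, 'c) monoid_scheme" and H :: "('b, 'd) monoid_scheme"
  assumes "group G" "finite (carrier G)" "group H" "finite (carrier H)" "isoclinic G H"
    and "a * order G = card {xs \<in> tuples G (Suc n). Q (rel_graph (commutes G) xs)}"
    and "b * order H = card {xs \<in> tuples H (Suc n). Q (rel_graph (commutes H) xs)}"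
  shows "(of_nat a :: rat) = (of_nat (order G) / of_nat (order H)) ^ n * of_nat b"
proof -
  define zG zH where "zG = card (grp_center G)" and "zH = card (grp_center H)"
  have "zG > 0" "order H > 0"
    using card_center_pos[OF assms(1,2)] assms(4)
      monoid.order_gt_0_iff_finite[OF group.is_monoid[OF assms(3)]]
    unfolding zG_def by blast+
  have "order G * zH = order H * zG"
    using group.lagrange_finite[OF assms(1,2) center_subgroup[OF assms(1)]]
      group.lagrange_finite[OF assms(3,4) center_subgroup[OF assms(3)]]
      isoclinic_card_central_quotient[OF assms(5)]
    unfolding zG_def zH_def by (metis mult.assoc mult.commute)
  moreover have "a * order G * zH ^ Suc n = b * order H * zG ^ Suc n"
    using isoclinic_card_commuting_tuples[OF assms(1-5), of "Suc n" Q]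
    unfolding assms(6,7)[symmetric] zG_def zH_def .
  ultimately show ?thesis
    using \<open>zG > 0\<close> \<open>order H > 0\<close> by (rule ratio_eq_if_scaled_counts_eq)
qed

theorem theorem4p3:
  fixes G :: "('a, 'c) monoid_scheme" and H :: "('b, 'd) monoid_scheme"
  assumes "group G" and "finite (carrier G)"
    and "group H" and "finite (carrier H)"
    and "isoclinic G H"
  shows "gf_A G = gf_A H oo (fps_const (of_nat (order G) / of_nat (order H)) * fps_X)
       \<and> gf_B G = gf_B H oo (fps_const (of_nat (order G) / of_nat (order H)) * fps_X)"
proof -
  let ?r = "of_nat (order G) / of_nat (order H) :: rat"
  have "of_nat (alpha G n) = ?r ^ n * of_nat (alpha H n)" for n
    using isoclinic_count_scaling[OF assms alpha_mult_order[OF assms(1,2)]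
        alpha_mult_order[OF assms(3,4)]] .
  moreover have "of_nat (beta G n) = ?r ^ n * of_nat (beta H n)" for n
    using isoclinic_count_scaling[OF assms beta_mult_order[OF assms(1,2)]
        beta_mult_order[OF assms(3,4)]] .
  ultimately show ?thesis
    by (simp add: fps_compose_linear gf_A_def gf_B_def fps_eq_iff)
qed

end
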